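(* Let $(\mathfrak g,[\cdot,\cdot],\alpha,\varepsilon,B_{\mathfrak g})$ be a quadratic multiplicative color Hom-Lie algebra, $\rho$ a faithful representation of $\mathfrak g$ on $(M,\beta)$ with $\alpha^2=\mathrm{id}$ and $\beta^2=\mathrm{id}$, and assume $\tilde\rho$, $\tilde\rho(x)(f)=-\varepsilon(x,f)\,f\circ\rho(x)$, is a representation of $\mathfrak g$ on $(M^*,\tilde\beta)$, $\tilde\beta(f)=f\circ\beta$. Let $\mathscr D:M\otimes M^*\to\mathfrak g$ be the even linear map with $B_{\mathfrak g}(x,\mathscr D(m\otimes f))=\langle\rho(\alpha(x))(m),f\rangle$ for all $x$, where $\langle n,f\rangle=\varepsilon(n,f)f(n)$, and equip $M\otimes M^*$ with the bracket $[m\otimes f,m'\otimes f']=\rho(\mathscr D(m\otimes f))(m')\otimes\tilde\beta(f')+\varepsilon(m+f,m')\,\beta(m')\otimes\tilde\rho(\mathscr D(m\otimes f))(f')$ and twist $\beta\otimes\tilde\beta$. If $\mathscr D$ is bijective, then $(M\otimes M^*,[\cdot,\cdot],\beta\otimes\tilde\beta)$ is a quadratic color Hom-Leibniz algebra with respect to the bilinear form $B(u,v)=B_{\mathfrak g}(\mathscr D(u),\mathscr D(v))$; that is, $B$ is nondegenerate, $\varepsilon$-symmetric, invariant ($B([u,v],w)=B(u,[v,w])$), and $\beta\otimes\tilde\beta$ is $B$-symmetric.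
   Context: $\mathbb K$ is a field of characteristic zero and $\Gamma$ an abelian group. A bicharacter is a map $\varepsilon:\Gamma\times\Gamma\to\mathbb K\setminus\{0\}$ with $\varepsilon(a,b)\varepsilon(b,a)=1$, $\varepsilon(a,b+c)=\varepsilon(a,b)\varepsilon(a,c)$, $\varepsilon(a+b,c)=\varepsilon(a,c)\varepsilon(b,c)$; for homogeneous elements $\varepsilon(x,y)=\varepsilon(\deg x,\deg y)$. A color Hom-Lie algebra $(\mathfrak g,[\cdot,\cdot],\alpha,\varepsilon)$: $\Gamma$-graded space, even bilinear bracket, even linear $\alpha$, with $[x,y]=-\varepsilon(x,y)[y,x]$ and $\varepsilon(z,x)[\alpha(x),[y,z]]+\varepsilon(x,y)[\alpha(y),[z,x]]+\varepsilon(y,z)[\alpha(z),[x,y]]=0$; multiplicative means $\alpha([x,y])=[\alpha(x),\alpha(y)]$; quadratic means equipped with a nondegenerate $\varepsilon$-symmetric ($B(x,y)=\varepsilon(x,y)B(y,x)$) invariant bilinear form with $\alpha$ $B$-symmetric. A representation of multiplicative $\mathfrak g$ on $(M,\beta)$ is an even linear $\rho:\mathfrak g\to\mathfrak{gl}(M)$ with $\rho([x,y])\circ\beta=\rho(\alpha(x))\circ\rho(y)-\varepsilon(x,y)\rho(\alpha(y))\circ\rho(x)$ and $\beta\circ\rho(x)=\rho(\alpha(x))\circ\beta$; faithful means injective. A color Hom-Leibniz algebra $(L,[\cdot,\cdot],\tau,\varepsilon)$ is a $\Gamma$-graded space with even bilinear bracket and even linear $\tau$ satisfying $[\tau(u),[v,w]]=[[u,v],\tau(w)]+\varepsilon(u,v)[\tau(v),[u,w]]$;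 it is quadratic if equipped with a nondegenerate, $\varepsilon$-symmetric, invariant bilinear form for which $\tau$ is symmetric. *)

theory Defs
  imports Complex_Main
begin

(* Vector spaces over a field 'k are encoded by a scalar multiplication
   s :: 'k => 'v => 'v on a type 'v :: ab_group_add (HOL.Vector_Spaces). *)

definition bicharacter :: "('g::ab_group_add \<Rightarrow> 'g \<Rightarrow> 'k::field) \<Rightarrow> bool" where
  "bicharacter eps \<longleftrightarrow>
     (\<forall>a b. eps a b \<noteq> 0) \<and>
     (\<forall>a b. eps a b * eps b a = 1) \<and>
     (\<forall>a b c. eps a (b + c) = eps a b * eps a c) \<and>
     (\<forall>a b c. eps (a + b) c = eps a c * eps b c)"

definition graded_space ::
  "('k::field \<Rightarrow> 'v::ab_group_add \<Rightarrow> 'v) \<Rightarrow> ('g \<Rightarrow> 'v set) \<Rightarrow> bool" where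
  "graded_space s V \<longleftrightarrow>
     Vector_Spaces.vector_space s \<and>
     (\<forall>a. Modules.module.subspace s (V a)) \<and>
     (\<forall>v. \<exists>S c. finite S \<and> (\<forall>a\<in>S. c a \<in> V a) \<and> v = (\<Sum>a\<in>S. c a)) \<and>
     (\<forall>S c. finite S \<longrightarrow> (\<forall>a\<in>S. c a \<in> V a) \<longrightarrow> (\<Sum>a\<in>S. c a) = 0 \<longrightarrow> (\<forall>a\<in>S. c a = 0))"

definition bilin ::
  "('k::field \<Rightarrow> 'u::ab_group_add \<Rightarrow> 'u) \<Rightarrow> ('k \<Rightarrow> 'v::ab_group_add \<Rightarrow> 'v) \<Rightarrow>
   ('k \<Rightarrow> 'w::ab_group_add \<Rightarrow> 'w) \<Rightarrow> ('u \<Rightarrow> 'v \<Rightarrow> 'w) \<Rightarrow> bool" where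
  "bilin s1 s2 s3 h \<longleftrightarrow>
     (\<forall>x. Vector_Spaces.linear s2 s3 (h x)) \<and> (\<forall>y. Vector_Spaces.linear s1 s3 (\<lambda>x. h x y))"

definition even_map ::
  "('k::field \<Rightarrow> 'u::ab_group_add \<Rightarrow> 'u) \<Rightarrow> ('k \<Rightarrow> 'v::ab_group_add \<Rightarrow> 'v) \<Rightarrow>
   ('g \<Rightarrow> 'u set) \<Rightarrow> ('g \<Rightarrow> 'v set) \<Rightarrow> ('u \<Rightarrow> 'v) \<Rightarrow> bool" where
  "even_map s1 s2 U V f \<longleftrightarrow> Vector_Spaces.linear s1 s2 f \<and> (\<forall>a. f ` U a \<subseteq> V a)"

definition even_bilin ::
  "('k::field \<Rightarrow> 'u::ab_group_add \<Rightarrow> 'u) \<Rightarrow> ('k \<Rightarrow> 'v::ab_group_add \<Rightarrow> 'v) \<Rightarrow>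
   ('k \<Rightarrow> 'w::ab_group_add \<Rightarrow> 'w) \<Rightarrow>
   ('g::ab_group_add \<Rightarrow> 'u set) \<Rightarrow> ('g \<Rightarrow> 'v set) \<Rightarrow> ('g \<Rightarrow> 'w set) \<Rightarrow>
   ('u \<Rightarrow> 'v \<Rightarrow> 'w) \<Rightarrow> bool" where
  "even_bilin s1 s2 s3 U V W h \<longleftrightarrow> bilin s1 s2 s3 h \<and>
     (\<forall>a b x y. x \<in> U a \<longrightarrow> y \<in> V b \<longrightarrow> h x y \<in> W (a + b))"

definition color_hom_lie ::
  "('k::field \<Rightarrow> 'a::ab_group_add \<Rightarrow> 'a) \<Rightarrow> ('g::ab_group_add \<Rightarrow> 'a set) \<Rightarrow>
   ('a \<Rightarrow> 'a \<Rightarrow> 'a) \<Rightarrow> ('a \<Rightarrow> 'a) \<Rightarrow> ('g \<Rightarrow> 'g \<Rightarrow> 'k) \<Rightarrow> bool" where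
  "color_hom_lie s G br al eps \<longleftrightarrow>
     graded_space s G \<and> even_bilin s s s G G G br \<and> even_map s s G G al \<and>
     (\<forall>a b x y. x \<in> G a \<longrightarrow> y \<in> G b \<longrightarrow> br x y = s (- eps a b) (br y x)) \<and>
     (\<forall>a b c x y z. x \<in> G a \<longrightarrow> y \<in> G b \<longrightarrow> z \<in> G c \<longrightarrow>
        s (eps c a) (br (al x) (br y z)) + s (eps a b) (br (al y) (br z x))
        + s (eps b c) (br (al z) (br x y)) = 0)"

definition multiplicative :: "('a \<Rightarrow> 'a \<Rightarrow> 'a) \<Rightarrow> ('a \<Rightarrow> 'a) \<Rightarrow> bool" where
  "multiplicative br al \<longleftrightarrow> (\<forall>x y. al (br x y) = br (al x) (al y))"

definition quadratic_color_hom_lie ::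
  "('k::field \<Rightarrow> 'a::ab_group_add \<Rightarrow> 'a) \<Rightarrow> ('g::ab_group_add \<Rightarrow> 'a set) \<Rightarrow>
   ('a \<Rightarrow> 'a \<Rightarrow> 'a) \<Rightarrow> ('a \<Rightarrow> 'a) \<Rightarrow> ('g \<Rightarrow> 'g \<Rightarrow> 'k) \<Rightarrow> ('a \<Rightarrow> 'a \<Rightarrow> 'k) \<Rightarrow> bool" where
  "quadratic_color_hom_lie s G br al eps B \<longleftrightarrow>
     color_hom_lie s G br al eps \<and> bilin s s (*) B \<and>
     (\<forall>x. (\<forall>y. B x y = 0) \<longrightarrow> x = 0) \<and> (\<forall>y. (\<forall>x. B x y = 0) \<longrightarrow> y = 0) \<and>
     (\<forall>a b x y. x \<in> G a \<longrightarrow> y \<in> G b \<longrightarrow> B x y = eps a b * B y x) \<and>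
     (\<forall>x y z. B (br x y) z = B x (br y z)) \<and>
     (\<forall>x y. B (al x) y = B x (al y))"

definition hom_lie_rep ::
  "('k::field \<Rightarrow> 'a::ab_group_add \<Rightarrow> 'a) \<Rightarrow> ('g::ab_group_add \<Rightarrow> 'a set) \<Rightarrow>
   ('a \<Rightarrow> 'a \<Rightarrow> 'a) \<Rightarrow> ('a \<Rightarrow> 'a) \<Rightarrow> ('g \<Rightarrow> 'g \<Rightarrow> 'k) \<Rightarrow>
   ('k \<Rightarrow> 'm::ab_group_add \<Rightarrow> 'm) \<Rightarrow> ('g \<Rightarrow> 'm set) \<Rightarrow>
   ('a \<Rightarrow> 'm \<Rightarrow> 'm) \<Rightarrow> ('m \<Rightarrow> 'm) \<Rightarrow> bool" where
  "hom_lie_rep s G br al eps sM MG rho be \<longleftrightarrow>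
     graded_space sM MG \<and> even_map sM sM MG MG be \<and>
     even_bilin s sM sM G MG MG rho \<and>
     (\<forall>a b x y. x \<in> G a \<longrightarrow> y \<in> G b \<longrightarrow>
        rho (br x y) \<circ> be = (\<lambda>m. rho (al x) (rho y m) - sM (eps a b) (rho (al y) (rho x m)))) \<and>
     (\<forall>x. be \<circ> rho x = rho (al x) \<circ> be)"

definition dual_grading ::
  "('g::ab_group_add \<Rightarrow> 'm set) \<Rightarrow> ('f \<Rightarrow> 'm \<Rightarrow> 'k::zero) \<Rightarrow> 'g \<Rightarrow> 'f set" where
  "dual_grading MG ev c = {f. \<forall>d m. m \<in> MG d \<longrightarrow> d \<noteq> - c \<longrightarrow> ev f m = 0}"

(* (F, ev) is the graded dual M* of the graded space M: ev is the evaluation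
   pairing, f \<mapsto> ev f is injective, and its image consists of the finite sums
   of homogeneous linear functionals *)
definition is_graded_dual ::
  "('k::field \<Rightarrow> 'm::ab_group_add \<Rightarrow> 'm) \<Rightarrow> ('g::ab_group_add \<Rightarrow> 'm set) \<Rightarrow>
   ('k \<Rightarrow> 'f::ab_group_add \<Rightarrow> 'f) \<Rightarrow> ('f \<Rightarrow> 'm \<Rightarrow> 'k) \<Rightarrow> bool" where
  "is_graded_dual sM MG sF ev \<longleftrightarrow>
     bilin sF sM (*) ev \<and> inj ev \<and> graded_space sF (dual_grading MG ev) \<and>
     (\<forall>c \<phi>. Vector_Spaces.linear sM (*) \<phi> \<longrightarrow>
        (\<forall>d m. m \<in> MG d \<longrightarrow> d \<noteq> - c \<longrightarrow> \<phi> m = 0) \<longrightarrow> (\<exists>f. ev f = \<phi>))"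

definition is_tensor_product ::
  "('k::field \<Rightarrow> 'm::ab_group_add \<Rightarrow> 'm) \<Rightarrow> ('k \<Rightarrow> 'f::ab_group_add \<Rightarrow> 'f) \<Rightarrow>
   ('k \<Rightarrow> 't::ab_group_add \<Rightarrow> 't) \<Rightarrow> ('m \<Rightarrow> 'f \<Rightarrow> 't) \<Rightarrow> bool" where
  "is_tensor_product sM sF sT tens \<longleftrightarrow>
     bilin sM sF sT tens \<and>
     Modules.module.span sT {tens m f | m f. True} = UNIV \<and>
     (\<forall>\<phi>. bilin sM sF (*) \<phi> \<longrightarrow>
        (\<exists>L. Vector_Spaces.linear sT (*) L \<and> (\<forall>m f. L (tens m f) = \<phi> m f)))"

definition tensor_grading ::
  "('k::field \<Rightarrow> 't::ab_group_add \<Rightarrow> 't) \<Rightarrow> ('g::ab_group_add \<Rightarrow> 'm set) \<Rightarrow> ('g \<Rightarrow> 'f set) \<Rightarrow>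
   ('m \<Rightarrow> 'f \<Rightarrow> 't) \<Rightarrow> 'g \<Rightarrow> 't set" where
  "tensor_grading sT MG FG tens c =
     Modules.module.span sT {tens m f | m f a b. m \<in> MG a \<and> f \<in> FG b \<and> a + b = c}"

definition color_hom_leibniz ::
  "('k::field \<Rightarrow> 'l::ab_group_add \<Rightarrow> 'l) \<Rightarrow> ('g::ab_group_add \<Rightarrow> 'l set) \<Rightarrow>
   ('l \<Rightarrow> 'l \<Rightarrow> 'l) \<Rightarrow> ('l \<Rightarrow> 'l) \<Rightarrow> ('g \<Rightarrow> 'g \<Rightarrow> 'k) \<Rightarrow> bool" where
  "color_hom_leibniz s V br tau eps \<longleftrightarrow>
     graded_space s V \<and> even_bilin s s s V V V br \<and> even_map s s V V tau \<and>
     (\<forall>a b c u v w. u \<in> V a \<longrightarrow> v \<in> V b \<longrightarrow> w \<in> V c \<longrightarrow>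
        br (tau u) (br v w) = br (br u v) (tau w) + s (eps a b) (br (tau v) (br u w)))"

definition quadratic_color_hom_leibniz ::
  "('k::field \<Rightarrow> 'l::ab_group_add \<Rightarrow> 'l) \<Rightarrow> ('g::ab_group_add \<Rightarrow> 'l set) \<Rightarrow>
   ('l \<Rightarrow> 'l \<Rightarrow> 'l) \<Rightarrow> ('l \<Rightarrow> 'l) \<Rightarrow> ('g \<Rightarrow> 'g \<Rightarrow> 'k) \<Rightarrow> ('l \<Rightarrow> 'l \<Rightarrow> 'k) \<Rightarrow> bool" where
  "quadratic_color_hom_leibniz s V br tau eps B \<longleftrightarrow>
     color_hom_leibniz s V br tau eps \<and> bilin s s (*) B \<and>
     (\<forall>x. (\<forall>y. B x y = 0) \<longrightarrow> x = 0) \<and> (\<forall>y. (\<forall>x. B x y = 0) \<longrightarrow> y = 0) \<and>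
     (\<forall>a b x y. x \<in> V a \<longrightarrow> y \<in> V b \<longrightarrow> B x y = eps a b * B y x) \<and>
     (\<forall>x y z. B (br x y) z = B x (br y z)) \<and>
     (\<forall>x y. B (tau x) y = B x (tau y))"

end

theory Submission
  imports Defs
begin

text \<open>The map \<open>D\<close> intertwines the structures: \<open>D [u, v] = [D u, D v]\<close> and
  \<open>D \<circ> tau = \<alpha> \<circ> D\<close>. For pure tensors of homogeneous elements this is checked by
  pairing both sides with an arbitrary homogeneous \<open>x\<close> under the nondegenerate form \<open>B\<^sub>g\<close>:
  invariance of \<open>B\<^sub>g\<close>, multiplicativity, \<open>\<alpha>\<^sup>2 = \<beta>\<^sup>2 = id\<close> and the representation identity
  reduce both pairings to the same combination of \<open>\<langle>\<rho>(x)\<rho>(\<alpha> y)\<beta> m, f\<rangle>\<close> and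
  \<open>\<langle>\<rho>(y)\<rho>(\<alpha> x)\<beta> m, f\<rangle>\<close>, up to an identity between values of \<open>\<epsilon>\<close>; bilinearity
  extends this to all of \<open>M \<otimes> M\<^sup>*\<close>. Hence \<open>D\<close> is an isomorphism of graded algebras onto
  \<open>(\<g>, [\<cdot>,\<cdot>], \<alpha>)\<close>. A color Hom-Lie algebra satisfies the Hom-Leibniz identity (by
  \<open>\<epsilon>\<close>-skew-symmetry and the Hom-Jacobi identity), and this structure, together with the
  quadratic form, transports back along \<open>D\<close>.\<close>

lemma linear_map_add: "Vector_Spaces.linear s1 s2 f \<Longrightarrow> f (x + y) = f x + f y"
  by (simp add: Vector_Spaces.linear_iff)

lemma linear_map_scale: "Vector_Spaces.linear s1 s2 f \<Longrightarrow> f (s1 c x) = s2 c (f x)"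
  by (simp add: Vector_Spaces.linear_iff)

lemma linear_map_zero: "Vector_Spaces.linear s1 s2 f \<Longrightarrow> f 0 = 0"
  by (metis module_hom.zero module_hom_iff_linear)

lemma linear_map_diff: "Vector_Spaces.linear s1 s2 f \<Longrightarrow> f (x - y) = f x - f y"
  by (metis module_hom.diff module_hom_iff_linear)

lemma linear_map_sum: "Vector_Spaces.linear s1 s2 f \<Longrightarrow> f (sum g A) = (\<Sum>a\<in>A. f (g a))"
  by (metis module_hom.sum module_hom_iff_linear)

lemma linear_map_compose:
  "Vector_Spaces.linear s1 s2 f \<Longrightarrow> Vector_Spaces.linear s2 s3 g \<Longrightarrow>
   Vector_Spaces.linear s1 s3 (\<lambda>x. g (f x))"
  using Vector_Spaces.linear_compose[of s1 s2 f s3 g] by (simp add: comp_def)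

lemma linear_map_eq_on_span:
  assumes "Vector_Spaces.linear s1 s2 f" "Vector_Spaces.linear s1 s2 g"
    and "\<And>b. b \<in> B \<Longrightarrow> f b = g b" and "x \<in> Modules.module.span s1 B"
  shows "f x = g x"
proof -
  interpret vector_space_pair s1 s2
    using assms(1) by (simp add: vector_space_pair_def Vector_Spaces.linear_iff)
  show ?thesis using linear_eq_on[OF assms(1,2,4)] assms(3) by blast
qed

lemma linear_inj_map_eq_0D:
  assumes "Vector_Spaces.linear s1 s2 f" "inj f" "f x = 0"
  shows "x = 0"
  using assms by (intro injD[where f = f]) (simp_all add: linear_map_zero)

lemma bilinear_eq_on_spanning_set:
  assumes h: "\<And>u. Vector_Spaces.linear s1 s2 (h u)" "\<And>v. Vector_Spaces.linear s1 s2 (\<lambda>u. h u v)"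
    and k: "\<And>u. Vector_Spaces.linear s1 s2 (k u)" "\<And>v. Vector_Spaces.linear s1 s2 (\<lambda>u. k u v)"
    and spans: "Modules.module.span s1 H = UNIV"
    and eq: "\<And>u v. u \<in> H \<Longrightarrow> v \<in> H \<Longrightarrow> h u v = k u v"
  shows "h u v = k u v"
proof -
  have "h u v = k u v" if "u \<in> H" for u
    by (rule linear_map_eq_on_span[OF h(1) k(1), where B = H]) (use eq[OF that] spans in auto)
  then show ?thesis
    by (rule linear_map_eq_on_span[OF h(2) k(2), where B = H]) (use spans in auto)
qed

lemma graded_space_span_components:
  assumes "graded_space s V"
  shows "Modules.module.span s (\<Union>a. V a) = UNIV"
proof -
  interpret vector_space s using assms by (simp add: graded_space_def)
  have "v \<in> span (\<Union>a. V a)" for v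
  proof -
    obtain S c where "\<forall>a\<in>S. c a \<in> V a" "v = (\<Sum>a\<in>S. c a)"
      using assms unfolding graded_space_def by blast
    then show ?thesis by (simp, intro span_sum span_base) blast
  qed
  then show ?thesis by auto
qed

lemma graded_space_sum_eq_0D:
  assumes "graded_space s V" "finite S" "\<forall>a\<in>S. c a \<in> V a" "(\<Sum>a\<in>S. c a) = 0" "a \<in> S"
  shows "c a = 0"
  using assms unfolding graded_space_def by blast

lemma span_components_decompose:
  assumes "vector_space s" and sub: "\<And>a. Modules.module.subspace s (V a)"
    and v: "v \<in> Modules.module.span s (\<Union>a. V a)"
  shows "\<exists>S c. finite S \<and> (\<forall>a\<in>S. c a \<in> V a) \<and> v = (\<Sum>a\<in>S. c a)"
proof -
  interpret vector_space s by fact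
  from v show ?thesis
  proof (induction rule: span_induct_alt)
    case base
    show ?case by (rule exI[of _ "{}"]) simp
  next
    case (step k x y)
    obtain b where x: "x \<in> V b" using step.hyps by blast
    obtain S c where S: "finite S" "\<forall>a\<in>S. c a \<in> V a" "y = (\<Sum>a\<in>S. c a)"
      using step.IH by blast
    let ?c = "c(b := s k x + (if b \<in> S then c b else 0))"
    have "(\<Sum>a\<in>insert b S. ?c a) = ?c b + (\<Sum>a\<in>S - {b}. c a)"
      using S(1) by (simp add: sum.insert_remove)
    also have "\<dots> = s k x + y"
      using S(1,3) by (cases "b \<in> S") (simp_all add: sum.remove add.assoc)
    finally have "s k x + y = (\<Sum>a\<in>insert b S. ?c a)" ..
    moreover have "\<forall>a\<in>insert b S. ?c a \<in> V a"
      using S(2) x sub by (auto intro: subspace_add subspace_scale subspace_0)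
    ultimately show ?case using S(1) by blast
  qed
qed

lemma graded_space_component_eq_0:
  assumes "graded_space s V" "finite S" "\<forall>a\<in>S. c a \<in> V a" "x \<in> V b"
    and "(\<Sum>a\<in>S. c a) = x" "a \<in> S" "a \<noteq> b"
  shows "c a = 0"
proof -
  interpret vector_space s using assms by (simp add: graded_space_def)
  have sub: "subspace (V d)" for d using assms(1) by (simp add: graded_space_def)
  let ?c = "c(b := (if b \<in> S then c b else 0) - x)"
  have "(\<Sum>d\<in>insert b S. ?c d) = ?c b + (\<Sum>d\<in>S - {b}. c d)"
    using assms(2) by (simp add: sum.insert_remove)
  also have "\<dots> = 0"
    using assms(2,5) by (cases "b \<in> S") (simp_all add: sum.remove diff_add_eq)
  finally have sum0: "(\<Sum>d\<in>insert b S. ?c d) = 0" .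
  have mem: "\<forall>d\<in>insert b S. ?c d \<in> V d"
    using assms(3,4) sub by (auto intro: subspace_diff subspace_0 subspace_neg)
  have "?c a = 0"
    using graded_space_sum_eq_0D[OF assms(1) _ mem sum0] assms(2,6) by simp
  then show ?thesis using assms(7) by simp
qed

lemma even_mapD:
  assumes "even_map s1 s2 U V f"
  shows "Vector_Spaces.linear s1 s2 f" "x \<in> U a \<Longrightarrow> f x \<in> V a"
  using assms unfolding even_map_def by blast+

lemma bilinD:
  assumes "bilin s1 s2 s3 h"
  shows "Vector_Spaces.linear s2 s3 (h x)" "Vector_Spaces.linear s1 s3 (\<lambda>x. h x y)"
  using assms unfolding bilin_def by blast+

lemma even_bilinD:
  assumes "even_bilin s1 s2 s3 U V W h"
  shows "bilin s1 s2 s3 h" "x \<in> U a \<Longrightarrow> y \<in> V b \<Longrightarrow> h x y \<in> W (a + b)"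
  using assms unfolding even_bilin_def by blast+

lemma color_hom_lieD:
  assumes "color_hom_lie s G br al eps"
  shows "graded_space s G" "even_bilin s s s G G G br" "even_map s s G G al"
    and "x \<in> G a \<Longrightarrow> y \<in> G b \<Longrightarrow> br x y = s (- eps a b) (br y x)"
    and "x \<in> G a \<Longrightarrow> y \<in> G b \<Longrightarrow> z \<in> G c \<Longrightarrow>
      s (eps c a) (br (al x) (br y z)) + s (eps a b) (br (al y) (br z x))
      + s (eps b c) (br (al z) (br x y)) = 0"
  using assms unfolding color_hom_lie_def by blast+

lemma quadratic_color_hom_lieD:
  assumes "quadratic_color_hom_lie s G br al eps B"
  shows "color_hom_lie s G br al eps" "bilin s s (*) B"
    and "\<forall>y. (\<forall>x. B x y = 0) \<longrightarrow> y = 0"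
    and "B (br x y) z = B x (br y z)" "B (al x) y = B x (al y)"
  using assms unfolding quadratic_color_hom_lie_def by blast+

lemma color_hom_leibnizD:
  assumes "color_hom_leibniz s V br tau eps"
  shows "graded_space s V" "even_bilin s s s V V V br" "even_map s s V V tau"
    and "u \<in> V a \<Longrightarrow> v \<in> V b \<Longrightarrow> w \<in> V c \<Longrightarrow>
      br (tau u) (br v w) = br (br u v) (tau w) + s (eps a b) (br (tau v) (br u w))"
  using assms unfolding color_hom_leibniz_def by blast+

lemma quadratic_color_hom_leibnizD:
  assumes "quadratic_color_hom_leibniz s V br tau eps B"
  shows "color_hom_leibniz s V br tau eps" "bilin s s (*) B"
    and "\<forall>x. (\<forall>y. B x y = 0) \<longrightarrow> x = 0" "\<forall>y. (\<forall>x. B x y = 0) \<longrightarrow> y = 0"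
    and "x \<in> V a \<Longrightarrow> y \<in> V b \<Longrightarrow> B x y = eps a b * B y x"
    and "B (br x y) z = B x (br y z)" "B (tau x) y = B x (tau y)"
  using assms unfolding quadratic_color_hom_leibniz_def by blast+

lemma hom_lie_repD:
  assumes "hom_lie_rep s G br al eps sM MG rho be"
  shows "graded_space sM MG" "even_map sM sM MG MG be" "even_bilin s sM sM G MG MG rho"
    and "x \<in> G a \<Longrightarrow> y \<in> G b \<Longrightarrow>
      rho (br x y) (be m) = rho (al x) (rho y m) - sM (eps a b) (rho (al y) (rho x m))"
    and "be (rho x m) = rho (al x) (be m)"
  using assms unfolding hom_lie_rep_def by (auto simp: fun_eq_iff)

lemma graded_space_pullback:
  assumes "vector_space s1" and sub: "\<And>a. Modules.module.subspace s1 (U a)"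
    and spans: "Modules.module.span s1 (\<Union>a. U a) = UNIV"
    and V: "graded_space s2 V" and f: "even_map s1 s2 U V f" and "inj f"
  shows "graded_space s1 U"
  unfolding graded_space_def
proof (intro conjI allI impI ballI)
  show "vector_space s1" "Modules.module.subspace s1 (U a)" for a by fact+
  show "\<exists>S c. finite S \<and> (\<forall>a\<in>S. c a \<in> U a) \<and> v = (\<Sum>a\<in>S. c a)" for v
    by (rule span_components_decompose[OF \<open>vector_space s1\<close> sub]) (simp add: spans)
next
  fix S c a
  assume S: "finite S" "\<forall>a\<in>S. c a \<in> U a" "(\<Sum>a\<in>S. c a) = 0" and "a \<in> S"
  note lin = even_mapD(1)[OF f]
  have "\<forall>a\<in>S. f (c a) \<in> V a" using S(2) even_mapD(2)[OF f] by blast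
  moreover have "(\<Sum>a\<in>S. f (c a)) = 0"
    using S(3) by (simp add: linear_map_sum[OF lin, symmetric] linear_map_zero[OF lin])
  ultimately have "f (c a) = 0"
    using \<open>a \<in> S\<close> by (intro graded_space_sum_eq_0D[OF V S(1), where c = "\<lambda>a. f (c a)"])
  then show "c a = 0" by (rule linear_inj_map_eq_0D[OF lin \<open>inj f\<close>])
qed

lemma even_inj_map_reflects_degree:
  assumes U: "graded_space s1 U" and V: "graded_space s2 V"
    and f: "even_map s1 s2 U V f" and "inj f" and ft: "f t \<in> V c"
  shows "t \<in> U c"
proof -
  interpret vector_space s1 using U by (simp add: graded_space_def)
  note lin = even_mapD(1)[OF f] and deg = even_mapD(2)[OF f]
  obtain S ct where S: "finite S" "\<forall>a\<in>S. ct a \<in> U a" "t = (\<Sum>a\<in>S. ct a)"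
    using U unfolding graded_space_def by blast
  have "ct a = 0" if "a \<in> S" "a \<noteq> c" for a
  proof -
    have "f (ct a) = 0"
      by (rule graded_space_component_eq_0[OF V S(1) _ ft _ that])
        (use S deg in \<open>auto simp: linear_map_sum[OF lin]\<close>)
    then show ?thesis by (rule linear_inj_map_eq_0D[OF lin \<open>inj f\<close>])
  qed
  moreover have "subspace (U c)" using U by (simp add: graded_space_def)
  ultimately have "ct a \<in> U c" if "a \<in> S" for a
    using S(2) that by (cases "a = c") (simp_all add: subspace_0)
  then show ?thesis
    unfolding S(3) using \<open>subspace (U c)\<close> by (simp add: subspace_sum)
qed

lemma nondegenerate_form_eqI:
  assumes G: "graded_space s G" and B: "bilin s s (*) B"
    and nondeg: "\<forall>y. (\<forall>x. B x y = 0) \<longrightarrow> y = 0"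
    and eq: "\<And>e x. x \<in> G e \<Longrightarrow> B x p = B x q"
  shows "p = q"
proof -
  have "B x p = B x q" for x
    by (rule linear_map_eq_on_span[OF bilinD(2)[OF B] bilinD(2)[OF B], where B = "\<Union>a. G a"])
      (use eq graded_space_span_components[OF G] in auto)
  then have "\<forall>x. B x (p - q) = 0" by (simp add: linear_map_diff[OF bilinD(1)[OF B]])
  then have "p - q = 0" using nondeg by blast
  then show ?thesis by simp
qed

lemma bicharacterD:
  assumes "bicharacter eps"
  shows "eps a b * eps b a = 1"
    "eps a (b + c) = eps a b * eps a c" "eps (a + b) c = eps a c * eps b c"
  using assms unfolding bicharacter_def by auto

text \<open>The sign relating the second summand of the bracket on \<open>M \<otimes> M\<^sup>*\<close> to the bracket
  in \<open>\<g>\<close> (see \<open>D_bracket_tens\<close>).\<close>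

lemma bicharacter_rearrange:
  assumes "bicharacter eps"
  shows "eps a c * eps (e + c) (a + d) * eps a d = eps (e + (a + c)) d * eps e a"
proof -
  note E = bicharacterD[OF assms]
  have "eps a c * eps (e + c) (a + d) * eps a d
      = (eps a c * eps c a) * (eps e a * eps e d * eps c d * eps a d)"
    unfolding E(2,3) by (simp only: mult_ac)
  also have "\<dots> = eps (e + (a + c)) d * eps e a"
    unfolding E by (simp only: mult_ac mult_1_left)
  finally show ?thesis .
qed

lemma color_hom_lie_leibniz_identity:
  assumes L: "color_hom_lie s G br al eps" and E: "bicharacter eps"
    and x: "x \<in> G a" and y: "y \<in> G b" and z: "z \<in> G c"
  shows "br (al x) (br y z) = br (br x y) (al z) + s (eps a b) (br (al y) (br x z))"
proof -
  interpret vector_space s using color_hom_lieD(1)[OF L] by (simp add: graded_space_def)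
  note skew = color_hom_lieD(4)[OF L]
  have br_deg: "br x y \<in> G (a + b)" and al_deg: "al z \<in> G c"
    using even_bilinD(2)[OF color_hom_lieD(2)[OF L] x y] even_mapD(2)[OF color_hom_lieD(3)[OF L] z] .
  define X where "X = br (al x) (br y z)"
  define Y where "Y = br (al y) (br z x)"
  define Z where "Z = br (al z) (br x y)"
  have "s (eps a c) (s (eps c a) X + s (eps a b) Y + s (eps b c) Z) = 0"
    unfolding X_def Y_def Z_def color_hom_lieD(5)[OF L x y z] by simp
  then have "X + s (eps a c * eps a b) Y + s (eps a c * eps b c) Z = 0"
    by (simp add: scale_right_distrib bicharacterD(1)[OF E])
  then have "X = - (s (eps a c * eps a b) Y + s (eps a c * eps b c) Z)"
    unfolding add.assoc by (rule eq_neg_iff_add_eq_0[THEN iffD2])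
  then have X: "X = - s (eps a c * eps a b) Y - s (eps a c * eps b c) Z"
    by simp
  have "br (br x y) (al z) = s (- eps (a + b) c) Z"
    unfolding Z_def using br_deg al_deg by (rule skew)
  moreover have "br (al y) (br x z) = s (- eps a c) Y"
    unfolding skew[OF x z] Y_def
    by (rule linear_map_scale[OF bilinD(1)[OF even_bilinD(1)[OF color_hom_lieD(2)[OF L]]]])
  ultimately show ?thesis
    unfolding X_def[symmetric] X bicharacterD(3)[OF E] by (simp add: mult_ac)
qed

lemma color_hom_lie_imp_leibniz:
  assumes "color_hom_lie s G br al eps" and "bicharacter eps"
  shows "color_hom_leibniz s G br al eps"
  unfolding color_hom_leibniz_def
  using color_hom_lieD(1-3)[OF assms(1)] color_hom_lie_leibniz_identity[OF assms]
  by blast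

lemma quadratic_color_hom_lie_imp_leibniz:
  assumes "bicharacter eps" and Q: "quadratic_color_hom_lie s G br al eps B"
  shows "quadratic_color_hom_leibniz s G br al eps B"
  unfolding quadratic_color_hom_leibniz_def
  using color_hom_lie_imp_leibniz[OF quadratic_color_hom_lieD(1)[OF Q] assms(1)] Q
  unfolding quadratic_color_hom_lie_def by blast

lemma quadratic_color_hom_leibniz_pullback:
  assumes Q: "quadratic_color_hom_leibniz s G br al eps B"
    and TG: "graded_space sT TG" and D: "even_map sT s TG G D" and "bij D"
    and brT: "bilin sT sT sT brT" and tau: "Vector_Spaces.linear sT sT tau"
    and D_br: "\<And>u v. D (brT u v) = br (D u) (D v)"
    and D_tau: "\<And>u. D (tau u) = al (D u)"
  shows "quadratic_color_hom_leibniz sT TG brT tau eps (\<lambda>u v. B (D u) (D v))"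
proof -
  note L = quadratic_color_hom_leibnizD(1)[OF Q]
  note G = color_hom_leibnizD(1)[OF L]
  note D_lin = even_mapD(1)[OF D] and D_deg = even_mapD(2)[OF D]
  have "inj D" using \<open>bij D\<close> by (rule bij_is_inj)
  have D_surj: "\<exists>t. y = D t" for y using bij_is_surj[OF \<open>bij D\<close>] by (rule surjD)
  note D_eq_0 = linear_inj_map_eq_0D[OF D_lin \<open>inj D\<close>]
  note reflect = even_inj_map_reflects_degree[OF TG G D \<open>inj D\<close>]
  have "color_hom_leibniz sT TG brT tau eps"
    unfolding color_hom_leibniz_def even_bilin_def even_map_def
  proof (intro conjI allI impI subsetI)
    fix a b x y assume "x \<in> TG a" "y \<in> TG b"
    then have "D (brT x y) \<in> G (a + b)"
      unfolding D_br by (intro even_bilinD(2)[OF color_hom_leibnizD(2)[OF L]] D_deg)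
    then show "brT x y \<in> TG (a + b)" by (rule reflect)
  next
    fix a t assume "t \<in> tau ` TG a"
    then obtain u where u: "u \<in> TG a" and t: "t = tau u" by blast
    have "D (tau u) \<in> G a"
      unfolding D_tau by (intro even_mapD(2)[OF color_hom_leibnizD(3)[OF L]] D_deg u)
    then show "t \<in> TG a" unfolding t by (rule reflect)
  next
    fix a b c u v w assume "u \<in> TG a" "v \<in> TG b" "w \<in> TG c"
    then have "D (brT (tau u) (brT v w))
             = D (brT (brT u v) (tau w) + sT (eps a b) (brT (tau v) (brT u w)))"
      unfolding linear_map_add[OF D_lin] linear_map_scale[OF D_lin] D_br D_tau
      by (intro color_hom_leibnizD(4)[OF L] D_deg)
    then show "brT (tau u) (brT v w) = brT (brT u v) (tau w) + sT (eps a b) (brT (tau v) (brT u w))"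
      by (rule injD[OF \<open>inj D\<close>])
  qed (fact TG brT tau)+
  moreover have "bilin sT sT (*) (\<lambda>u v. B (D u) (D v))"
    unfolding bilin_def
    using linear_map_compose[OF D_lin bilinD(1)[OF quadratic_color_hom_leibnizD(2)[OF Q]]]
      linear_map_compose[OF D_lin bilinD(2)[OF quadratic_color_hom_leibnizD(2)[OF Q]]]
    by blast
  moreover have "\<forall>x. (\<forall>y. B (D x) (D y) = 0) \<longrightarrow> x = 0" "\<forall>y. (\<forall>x. B (D x) (D y) = 0) \<longrightarrow> y = 0"
    using quadratic_color_hom_leibnizD(3,4)[OF Q] D_surj D_eq_0 by metis+
  moreover have "\<forall>a b x y. x \<in> TG a \<longrightarrow> y \<in> TG b \<longrightarrow> B (D x) (D y) = eps a b * B (D y) (D x)"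
    by (intro allI impI quadratic_color_hom_leibnizD(5)[OF Q] D_deg)
  moreover have "\<forall>x y z. B (D (brT x y)) (D z) = B (D x) (D (brT y z))"
    unfolding D_br by (intro allI quadratic_color_hom_leibnizD(6)[OF Q])
  moreover have "\<forall>x y. B (D (tau x)) (D y) = B (D x) (D (tau y))"
    unfolding D_tau by (intro allI quadratic_color_hom_leibnizD(7)[OF Q])
  ultimately show ?thesis
    unfolding quadratic_color_hom_leibniz_def by (intro conjI) assumption+
qed

locale tensor_dual_setting =
  fixes eps :: "'g::ab_group_add \<Rightarrow> 'g \<Rightarrow> 'k::field"
    and s :: "'k \<Rightarrow> 'a::ab_group_add \<Rightarrow> 'a"
    and G :: "'g \<Rightarrow> 'a set"
    and br :: "'a \<Rightarrow> 'a \<Rightarrow> 'a" and al :: "'a \<Rightarrow> 'a" and Bg :: "'a \<Rightarrow> 'a \<Rightarrow> 'k"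
    and sM :: "'k \<Rightarrow> 'm::ab_group_add \<Rightarrow> 'm" and MG :: "'g \<Rightarrow> 'm set"
    and rho :: "'a \<Rightarrow> 'm \<Rightarrow> 'm" and be :: "'m \<Rightarrow> 'm"
    and sF :: "'k \<Rightarrow> 'f::ab_group_add \<Rightarrow> 'f" and ev :: "'f \<Rightarrow> 'm \<Rightarrow> 'k"
    and rt :: "'a \<Rightarrow> 'f \<Rightarrow> 'f" and bt :: "'f \<Rightarrow> 'f"
    and sT :: "'k \<Rightarrow> 't::ab_group_add \<Rightarrow> 't" and tens :: "'m \<Rightarrow> 'f \<Rightarrow> 't"
    and D :: "'t \<Rightarrow> 'a" and brT :: "'t \<Rightarrow> 't \<Rightarrow> 't" and tau :: "'t \<Rightarrow> 't"
  assumes eps: "bicharacter eps"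
    and quad: "quadratic_color_hom_lie s G br al eps Bg"
    and mult: "multiplicative br al"
    and rep: "hom_lie_rep s G br al eps sM MG rho be"
    and al2: "al \<circ> al = id"
    and be2: "be \<circ> be = id"
    and dual: "is_graded_dual sM MG sF ev"
    and bt_def: "\<forall>f. ev (bt f) = ev f \<circ> be"
    and rt_def: "\<forall>a b x f. x \<in> G a \<longrightarrow> f \<in> dual_grading MG ev b \<longrightarrow>
                   ev (rt x f) = (\<lambda>m. - (eps a b * ev f (rho x m)))"
    and rt_rep: "hom_lie_rep s G br al eps sF (dual_grading MG ev) rt bt"
    and tensor: "is_tensor_product sM sF sT tens"
    and D_even: "even_map sT s (tensor_grading sT MG (dual_grading MG ev) tens) G D"
    and D_def: "\<forall>a b c x m f. x \<in> G a \<longrightarrow> m \<in> MG b \<longrightarrow> f \<in> dual_grading MG ev c \<longrightarrow>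
                   Bg x (D (tens m f)) = eps (a + b) c * ev f (rho (al x) m)"
    and brT_bilin: "bilin sT sT sT brT"
    and brT_def: "\<forall>a b c m f m' f'. m \<in> MG a \<longrightarrow> f \<in> dual_grading MG ev b \<longrightarrow> m' \<in> MG c \<longrightarrow>
                   brT (tens m f) (tens m' f') =
                     tens (rho (D (tens m f)) m') (bt f')
                     + sT (eps (a + b) c) (tens (be m') (rt (D (tens m f)) f'))"
    and tau_lin: "Vector_Spaces.linear sT sT tau"
    and tau_def: "\<forall>m f. tau (tens m f) = tens (be m) (bt f)"
    and D_inj: "inj D"
begin

abbreviation FG :: "'g \<Rightarrow> 'f set" where "FG \<equiv> dual_grading MG ev"

abbreviation TG :: "'g \<Rightarrow> 't set" where "TG \<equiv> tensor_grading sT MG FG tens"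

abbreviation homogeneous_tensors :: "'t set" where
  "homogeneous_tensors \<equiv> {tens m f | m f a b. m \<in> MG a \<and> f \<in> FG b}"

sublocale T: vector_space sT
  using tau_lin by (simp add: Vector_Spaces.linear_iff)

lemma al_al [simp]: "al (al x) = x"
  using al2 by (rule pointfree_idE)

lemma be_be [simp]: "be (be m) = m"
  using be2 by (rule pointfree_idE)

lemma ev_bt: "ev (bt f) m = ev f (be m)"
  using bt_def by simp

lemmas be_rho = hom_lie_repD(5)[OF rep]

lemmas color_hom_lie = quadratic_color_hom_lieD(1)[OF quad]
lemmas G_graded = color_hom_lieD(1)[OF color_hom_lie]
lemmas br_bilin = even_bilinD(1)[OF color_hom_lieD(2)[OF color_hom_lie]]
lemmas br_deg = even_bilinD(2)[OF color_hom_lieD(2)[OF color_hom_lie]]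
lemmas al_linear = even_mapD(1)[OF color_hom_lieD(3)[OF color_hom_lie]]
lemmas al_deg = even_mapD(2)[OF color_hom_lieD(3)[OF color_hom_lie]]
lemmas Bg_bilin = quadratic_color_hom_lieD(2)[OF quad]
lemmas Bg_linear = bilinD(1)[OF Bg_bilin]
lemmas Bg_nondegenerate = quadratic_color_hom_lieD(3)[OF quad]
lemmas Bg_invariant = quadratic_color_hom_lieD(4)[OF quad]
lemmas Bg_al = quadratic_color_hom_lieD(5)[OF quad]
lemmas rho_deg = even_bilinD(2)[OF hom_lie_repD(3)[OF rep]]
lemmas be_deg = even_mapD(2)[OF hom_lie_repD(2)[OF rep]]
lemmas rt_deg = even_bilinD(2)[OF hom_lie_repD(3)[OF rt_rep]]
lemmas bt_deg = even_mapD(2)[OF hom_lie_repD(2)[OF rt_rep]]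
lemmas D_linear = even_mapD(1)[OF D_even]
lemmas D_deg = even_mapD(2)[OF D_even]

lemma ev_linear: "Vector_Spaces.linear sM (*) (ev f)"
  using dual unfolding is_graded_dual_def by (blast dest: bilinD(1))

lemma tens_deg: "m \<in> MG a \<Longrightarrow> f \<in> FG b \<Longrightarrow> tens m f \<in> TG (a + b)"
  unfolding tensor_grading_def by (rule T.span_base) blast

lemma pairing_rho_summand:
  assumes "x \<in> G e" "y \<in> G a" "m \<in> MG c" "f \<in> FG d"
  shows "Bg x (D (tens (rho y m) (bt f))) = eps (e + (a + c)) d * ev f (rho x (rho (al y) (be m)))"
  unfolding D_def[rule_format, OF assms(1) rho_deg[OF assms(2,3)] bt_deg[OF assms(4)]]
  by (simp add: ev_bt be_rho)

lemma pairing_rt_summand: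
  assumes "x \<in> G e" "y \<in> G a" "m \<in> MG c" "f \<in> FG d"
  shows "Bg x (D (tens (be m) (rt y f)))
       = - (eps (e + c) (a + d) * eps a d * ev f (rho y (rho (al x) (be m))))"
  unfolding D_def[rule_format, OF assms(1) be_deg[OF assms(3)] rt_deg[OF assms(2,4)]]
    rt_def[rule_format, OF assms(2,4)]
  by simp

lemma pairing_bracket:
  assumes x: "x \<in> G e" and y: "y \<in> G a" and m: "m \<in> MG c" and f: "f \<in> FG d"
  shows "Bg x (br y (D (tens m f))) = eps (e + (a + c)) d *
           (ev f (rho x (rho (al y) (be m))) - eps e a * ev f (rho y (rho (al x) (be m))))"
proof -
  have "rho (al (br x y)) m = rho (br (al x) (al y)) (be (be m))"
    using mult by (simp add: multiplicative_def)
  also have "\<dots> = rho x (rho (al y) (be m)) - sM (eps e a) (rho y (rho (al x) (be m)))"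
    using hom_lie_repD(4)[OF rep al_deg[OF x] al_deg[OF y], of "be m"] by simp
  finally have "Bg (br x y) (D (tens m f)) = eps (e + a + c) d *
      ev f (rho x (rho (al y) (be m)) - sM (eps e a) (rho y (rho (al x) (be m))))"
    unfolding D_def[rule_format, OF br_deg[OF x y] m f] by simp
  then show ?thesis
    by (simp add: Bg_invariant[symmetric] linear_map_diff[OF ev_linear]
        linear_map_scale[OF ev_linear] add.assoc)
qed

lemma D_bracket_tens:
  assumes m: "m \<in> MG a" and f: "f \<in> FG b" and m': "m' \<in> MG c" and f': "f' \<in> FG d"
  shows "D (brT (tens m f) (tens m' f')) = br (D (tens m f)) (D (tens m' f'))"
proof (rule nondegenerate_form_eqI[OF G_graded Bg_bilin Bg_nondegenerate])
  fix e x assume x: "x \<in> G e"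
  define y where "y = D (tens m f)"
  have y: "y \<in> G (a + b)" unfolding y_def by (intro D_deg tens_deg m f)
  let ?P = "ev f' (rho x (rho (al y) (be m')))"
  let ?Q = "ev f' (rho y (rho (al x) (be m')))"
  have "Bg x (D (brT (tens m f) (tens m' f')))
      = Bg x (D (tens (rho y m') (bt f'))) + eps (a + b) c * Bg x (D (tens (be m') (rt y f')))"
    unfolding brT_def[rule_format, OF m f m', folded y_def]
    by (simp add: linear_map_add[OF D_linear] linear_map_scale[OF D_linear]
        linear_map_add[OF Bg_linear] linear_map_scale[OF Bg_linear])
  also have "\<dots> = eps (e + (a + b + c)) d * ?P
      - eps (a + b) c * eps (e + c) (a + b + d) * eps (a + b) d * ?Q"
    using pairing_rho_summand[OF x y m' f'] pairing_rt_summand[OF x y m' f'] by simp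
  also have "\<dots> = eps (e + (a + b + c)) d * (?P - eps e (a + b) * ?Q)"
    unfolding bicharacter_rearrange[OF eps] by (simp add: algebra_simps)
  also have "\<dots> = Bg x (br y (D (tens m' f')))"
    using pairing_bracket[OF x y m' f'] by simp
  finally show "Bg x (D (brT (tens m f) (tens m' f'))) = Bg x (br y (D (tens m' f')))" .
qed

lemma D_twist_tens:
  assumes m: "m \<in> MG b" and f: "f \<in> FG c"
  shows "D (tau (tens m f)) = al (D (tens m f))"
proof (rule nondegenerate_form_eqI[OF G_graded Bg_bilin Bg_nondegenerate])
  fix e x assume x: "x \<in> G e"
  have "Bg x (D (tau (tens m f))) = eps (e + b) c * ev f (rho x m)"
    using D_def[rule_format, OF x be_deg[OF m] bt_deg[OF f]] by (simp add: tau_def ev_bt be_rho)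
  also have "\<dots> = Bg (al x) (D (tens m f))"
    using D_def[rule_format, OF al_deg[OF x] m f] by simp
  finally show "Bg x (D (tau (tens m f))) = Bg x (al (D (tens m f)))"
    by (simp add: Bg_al)
qed

lemma homogeneous_tensors_span: "T.span homogeneous_tensors = UNIV"
proof -
  have tens_bilin: "bilin sM sF sT tens" using tensor unfolding is_tensor_product_def by blast
  have "tens m f \<in> T.span homogeneous_tensors" for m f
  proof -
    obtain S cm where S: "\<forall>a\<in>S. cm a \<in> MG a" "m = (\<Sum>a\<in>S. cm a)"
      using hom_lie_repD(1)[OF rep] unfolding graded_space_def by blast
    obtain R cf where R: "\<forall>b\<in>R. cf b \<in> FG b" "f = (\<Sum>b\<in>R. cf b)"
      using hom_lie_repD(1)[OF rt_rep] unfolding graded_space_def by blast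
    have "tens m f = (\<Sum>b\<in>R. \<Sum>a\<in>S. tens (cm a) (cf b))"
      unfolding S(2) R(2) linear_map_sum[OF bilinD(2)[OF tens_bilin]]
        linear_map_sum[OF bilinD(1)[OF tens_bilin]] ..
    also have "\<dots> \<in> T.span homogeneous_tensors"
      using S(1) R(1) by (intro T.span_sum T.span_base) blast
    finally show ?thesis .
  qed
  then have "T.span {tens m f | m f. True} \<subseteq> T.span homogeneous_tensors"
    by (intro T.span_minimal) auto
  moreover have "T.span {tens m f | m f. True} = UNIV"
    using tensor unfolding is_tensor_product_def by blast
  ultimately show ?thesis by blast
qed

lemma D_bracket: "D (brT u v) = br (D u) (D v)"
proof (rule bilinear_eq_on_spanning_set[OF _ _ _ _ homogeneous_tensors_span])
  show "Vector_Spaces.linear sT s (\<lambda>v. D (brT u v))"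
    "Vector_Spaces.linear sT s (\<lambda>u. D (brT u v))"
    "Vector_Spaces.linear sT s (\<lambda>v. br (D u) (D v))"
    "Vector_Spaces.linear sT s (\<lambda>u. br (D u) (D v))" for u v
    by (rule linear_map_compose[OF bilinD(1)[OF brT_bilin] D_linear]
        linear_map_compose[OF bilinD(2)[OF brT_bilin] D_linear]
        linear_map_compose[OF D_linear bilinD(1)[OF br_bilin]]
        linear_map_compose[OF D_linear bilinD(2)[OF br_bilin]])+
qed (auto simp: D_bracket_tens)

lemma D_twist: "D (tau u) = al (D u)"
proof (rule linear_map_eq_on_span[where B = homogeneous_tensors])
  show "Vector_Spaces.linear sT s (\<lambda>u. D (tau u))" "Vector_Spaces.linear sT s (\<lambda>u. al (D u))"
    by (rule linear_map_compose[OF tau_lin D_linear] linear_map_compose[OF D_linear al_linear])+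
  show "u \<in> T.span homogeneous_tensors" by (simp only: homogeneous_tensors_span UNIV_I)
qed (auto simp: D_twist_tens)

lemma tensor_grading_graded: "graded_space sT TG"
proof (rule graded_space_pullback[OF _ _ _ G_graded D_even D_inj])
  show "vector_space sT" ..
  show "T.subspace (TG a)" for a unfolding tensor_grading_def by (rule T.subspace_span)
  have "homogeneous_tensors \<subseteq> (\<Union>a. TG a)" using tens_deg by blast
  then have "T.span homogeneous_tensors \<subseteq> T.span (\<Union>a. TG a)" by (rule T.span_mono)
  then show "T.span (\<Union>a. TG a) = UNIV" using homogeneous_tensors_span by blast
qed

end

theorem mainTheorem15:
  fixes eps :: "'g::ab_group_add \<Rightarrow> 'g \<Rightarrow> 'k::field_char_0"
    and s :: "'k \<Rightarrow> 'a::ab_group_add \<Rightarrow> 'a"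
    and G :: "'g \<Rightarrow> 'a set"
    and br :: "'a \<Rightarrow> 'a \<Rightarrow> 'a" and al :: "'a \<Rightarrow> 'a" and Bg :: "'a \<Rightarrow> 'a \<Rightarrow> 'k"
    and sM :: "'k \<Rightarrow> 'm::ab_group_add \<Rightarrow> 'm" and MG :: "'g \<Rightarrow> 'm set"
    and rho :: "'a \<Rightarrow> 'm \<Rightarrow> 'm" and be :: "'m \<Rightarrow> 'm"
    and sF :: "'k \<Rightarrow> 'f::ab_group_add \<Rightarrow> 'f" and ev :: "'f \<Rightarrow> 'm \<Rightarrow> 'k"
    and rt :: "'a \<Rightarrow> 'f \<Rightarrow> 'f" and bt :: "'f \<Rightarrow> 'f"
    and sT :: "'k \<Rightarrow> 't::ab_group_add \<Rightarrow> 't" and tens :: "'m \<Rightarrow> 'f \<Rightarrow> 't"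
    and D :: "'t \<Rightarrow> 'a" and brT :: "'t \<Rightarrow> 't \<Rightarrow> 't" and tau :: "'t \<Rightarrow> 't"
  assumes eps: "bicharacter eps"
    and quad: "quadratic_color_hom_lie s G br al eps Bg"
    and mult: "multiplicative br al"
    and rep: "hom_lie_rep s G br al eps sM MG rho be"
    and faithful: "inj rho"
    and al2: "al \<circ> al = id"
    and be2: "be \<circ> be = id"
    and dual: "is_graded_dual sM MG sF ev"
    and bt_def: "\<forall>f. ev (bt f) = ev f \<circ> be"
    and rt_bilin: "bilin s sF sF rt"
    and rt_def: "\<forall>a b x f. x \<in> G a \<longrightarrow> f \<in> dual_grading MG ev b \<longrightarrow>
                   ev (rt x f) = (\<lambda>m. - (eps a b * ev f (rho x m)))"
    and rt_rep: "hom_lie_rep s G br al eps sF (dual_grading MG ev) rt bt"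
    and tensor: "is_tensor_product sM sF sT tens"
    and D_even: "even_map sT s (tensor_grading sT MG (dual_grading MG ev) tens) G D"
    and D_def: "\<forall>a b c x m f. x \<in> G a \<longrightarrow> m \<in> MG b \<longrightarrow> f \<in> dual_grading MG ev c \<longrightarrow>
                   Bg x (D (tens m f)) = eps (a + b) c * ev f (rho (al x) m)"
    and brT_bilin: "bilin sT sT sT brT"
    and brT_def: "\<forall>a b c m f m' f'. m \<in> MG a \<longrightarrow> f \<in> dual_grading MG ev b \<longrightarrow> m' \<in> MG c \<longrightarrow>
                   brT (tens m f) (tens m' f') =
                     tens (rho (D (tens m f)) m') (bt f')
                     + sT (eps (a + b) c) (tens (be m') (rt (D (tens m f)) f'))"
    and tau_lin: "Vector_Spaces.linear sT sT tau"
    and tau_def: "\<forall>m f. tau (tens m f) = tens (be m) (bt f)"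
    and D_bij: "bij D"
  shows "quadratic_color_hom_leibniz sT (tensor_grading sT MG (dual_grading MG ev) tens)
           brT tau eps (\<lambda>u v. Bg (D u) (D v))"
proof -
  interpret tensor_dual_setting eps s G br al Bg sM MG rho be sF ev rt bt sT tens D brT tau
    using eps quad mult rep al2 be2 dual bt_def rt_def rt_rep tensor D_even D_def brT_bilin
      brT_def tau_lin tau_def bij_is_inj[OF D_bij]
    by (rule tensor_dual_setting.intro)
  show ?thesis
    by (rule quadratic_color_hom_leibniz_pullback[OF quadratic_color_hom_lie_imp_leibniz[OF eps quad]
          tensor_grading_graded D_even D_bij brT_bilin tau_lin D_bracket D_twist])
qed

end
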